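(* Let $(X,A,Y)$ be jointly distributed with $A,Y\in\{0,1\}$, and assume there exist deterministic functions $f_Y^*,f_A^*$ with $Y=f_Y^*(X)$ and $A=f_A^*(X)$. Then, minimizing over all (possibly randomized) representations $Z=g(X)$, $$\min_{Z:\ I(Y;Z)=H(Y)} I(A;Z)=I(A;Y).$$
   Context: A (possibly randomized) representation is $Z=g(X,S)$ for a measurable $g$ and auxiliary randomness $S$ independent of $(X,A,Y)$. $H$ denotes Shannon entropy and $I$ mutual information. *)

theory Defs
  imports "HOL-Probability.Probability"
begin

end

theory Submission
  imports Defs
begin

(* Let q(z) be a version of P(Y | Z = z), obtained as a Radon-Nikodym derivative with respect to the
   law of Z. Since Y is Boolean, I(Y;Z) - H(Y) is minus the expectation of the binary entropy of
   q(Z), which is nonnegative and vanishes only at 0 and 1. Hence I(Y;Z) = H(Y) forces q(Z) in {0,1}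
   almost surely, i.e. Y = h(Z) almost surely for the measurable h z = (q z = 1). Then
   I(A;Y) = I(A;h(Z)) <= I(A;Z), the last step being data processing, which for Boolean A follows
   from the tower property of conditional probabilities and the pointwise inequality ln u <= u - 1.
   Conversely Z = Y (with trivial auxiliary randomness) satisfies I(Y;Z) = H(Y) and I(A;Z) = I(A;Y). *)

section \<open>Boolean random variables and elementary inequalities\<close>

lemma emeasure_Collect_split_bool:
  fixes D :: "'a \<Rightarrow> bool"
  assumes "\<And>d. {\<omega>\<in>space M. D \<omega> = d \<and> Q d \<omega>} \<in> sets M"
  shows "emeasure M {\<omega>\<in>space M. Q (D \<omega>) \<omega>} = (\<Sum>d\<in>UNIV. emeasure M {\<omega>\<in>space M. D \<omega> = d \<and> Q d \<omega>})"
proof -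
  have split: "{\<omega>\<in>space M. Q (D \<omega>) \<omega>} =
      {\<omega>\<in>space M. D \<omega> = True \<and> Q True \<omega>} \<union> {\<omega>\<in>space M. D \<omega> = False \<and> Q False \<omega>}"
  proof (rule set_eqI)
    fix \<omega> show "\<omega> \<in> {\<omega>\<in>space M. Q (D \<omega>) \<omega>} \<longleftrightarrow> \<omega> \<in> {\<omega>\<in>space M. D \<omega> = True \<and> Q True \<omega>} \<union> {\<omega>\<in>space M. D \<omega> = False \<and> Q False \<omega>}"
      by (cases "D \<omega>") auto
  qed
  show ?thesis
    unfolding split UNIV_bool by (subst plus_emeasure[symmetric]) (use assms[of True] assms[of False] in auto)
qed

lemma (in prob_space) prob_True_add_prob_False:
  fixes D :: "'a \<Rightarrow> bool"
  assumes [measurable]: "D \<in> measurable M (count_space UNIV)"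
  shows "prob {\<omega>\<in>space M. D \<omega> = True} + prob {\<omega>\<in>space M. D \<omega> = False} = 1"
proof -
  have "{\<omega>\<in>space M. D \<omega> = False} = space M - {\<omega>\<in>space M. D \<omega> = True}" by auto
  moreover have "{\<omega>\<in>space M. D \<omega> = True} \<in> events" by measurable
  ultimately show ?thesis using prob_compl by simp
qed

lemma (in prob_space) distr_bool_eq_density:
  fixes D :: "'a \<Rightarrow> bool"
  assumes [measurable]: "D \<in> measurable M (count_space UNIV)"
  shows "distr M (count_space UNIV) D = density (count_space UNIV) (\<lambda>d. prob {\<omega>\<in>space M. D \<omega> = d})"
proof (rule measure_eqI)
  fix B :: "bool set"
  have "emeasure (distr M (count_space UNIV) D) B = emeasure M {\<omega>\<in>space M. D \<omega> \<in> B}"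
    by (subst emeasure_distr) (auto simp: vimage_def Int_def conj_commute)
  also have "\<dots> = (\<Sum>d\<in>UNIV. emeasure M {\<omega>\<in>space M. D \<omega> = d \<and> d \<in> B})"
    by (rule emeasure_Collect_split_bool) auto
  also have "\<dots> = (\<Sum>d\<in>UNIV. ennreal (prob {\<omega>\<in>space M. D \<omega> = d}) * indicator B d)"
    by (intro sum.cong) (auto simp: emeasure_eq_measure indicator_def)
  also have "\<dots> = emeasure (density (count_space UNIV) (\<lambda>d. prob {\<omega>\<in>space M. D \<omega> = d})) B"
    by (simp add: emeasure_density nn_integral_count_space_finite)
  finally show "emeasure (distr M (count_space UNIV) D) B =
      emeasure (density (count_space UNIV) (\<lambda>d. prob {\<omega>\<in>space M. D \<omega> = d})) B" .
qed simp

lemma (in prob_space) distr_bool_pair_measure_eq_density: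
  fixes D :: "'a \<Rightarrow> bool"
  assumes D[measurable]: "D \<in> measurable M (count_space UNIV)" and N: "sigma_finite_measure N"
  shows "distr M (count_space UNIV) D \<Otimes>\<^sub>M N =
    density (count_space UNIV \<Otimes>\<^sub>M N) (\<lambda>x. prob {\<omega>\<in>space M. D \<omega> = fst x})"
proof -
  have "density (count_space UNIV) (\<lambda>d. prob {\<omega>\<in>space M. D \<omega> = d}) \<Otimes>\<^sub>M density N (\<lambda>_. 1) =
      density (count_space UNIV \<Otimes>\<^sub>M N) (\<lambda>(d, z). ennreal (prob {\<omega>\<in>space M. D \<omega> = d}) * 1)"
    by (rule pair_measure_density) (auto simp: density_1 N)
  then show ?thesis
    by (simp add: distr_bool_eq_density[OF D] density_1 case_prod_beta')
qed

lemma (in information_space) entropy_bool: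
  fixes D :: "'a \<Rightarrow> bool"
  assumes D[measurable]: "D \<in> measurable M (count_space UNIV)"
  shows "entropy b (count_space UNIV) D =
    - (\<Sum>d\<in>UNIV. prob {\<omega>\<in>space M. D \<omega> = d} * log b (prob {\<omega>\<in>space M. D \<omega> = d}))"
proof -
  have "distributed M (count_space UNIV) D (\<lambda>d. prob {\<omega>\<in>space M. D \<omega> = d})"
    unfolding distributed_def using distr_bool_eq_density[OF D] by auto
  then show ?thesis
    by (subst entropy_distr) (auto simp: lebesgue_integral_count_space_finite)
qed

lemma abs_mult_log_div_le:
  fixes x p b :: real
  assumes "0 \<le> x" "x \<le> 1" "0 < p" "1 < b"
  shows "\<bar>x * log b (x / p)\<bar> \<le> (1 + \<bar>ln p\<bar>) / ln b"
proof (cases "x = 0")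
  case True
  then show ?thesis using assms by simp
next
  case False
  then have x: "0 < x" using assms by simp
  have "ln (1 / x) \<le> 1 / x - 1" using x by (intro ln_le_minus_one) simp
  then have "x * - ln x \<le> x * (1 / x - 1)" using x by (intro mult_left_mono) (auto simp: ln_div)
  moreover have "x * (1 / x - 1) = 1 - x" using x by (simp add: field_simps)
  ultimately have "-1 \<le> x * ln x" using assms by linarith
  moreover have "x * ln x \<le> 0" using x assms by (simp add: mult_nonneg_nonpos)
  moreover have "\<bar>x * ln p\<bar> \<le> \<bar>ln p\<bar>" using assms by (simp add: abs_mult mult_left_le_one_le)
  ultimately have "\<bar>x * ln x - x * ln p\<bar> \<le> 1 + \<bar>ln p\<bar>" by linarith
  moreover have "x * log b (x / p) = (x * ln x - x * ln p) / ln b"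
    using x assms by (simp add: log_def ln_div field_simps)
  ultimately show ?thesis
    using assms by (simp add: abs_div divide_right_mono)
qed

lemma mult_log_nonpos:
  fixes x b :: real
  assumes "0 \<le> x" "x \<le> 1" "1 < b"
  shows "x * log b x \<le> 0"
  using assms by (cases "x = 0") (auto intro: mult_nonneg_nonpos)

lemma binary_entropy_eq_0_iff:
  fixes x b :: real
  assumes "0 \<le> x" "x \<le> 1" "1 < b"
  shows "x * log b x + (1 - x) * log b (1 - x) = 0 \<longleftrightarrow> x = 0 \<or> x = 1"
proof
  assume sum_0: "x * log b x + (1 - x) * log b (1 - x) = 0"
  show "x = 0 \<or> x = 1"
  proof (rule ccontr)
    assume "\<not> (x = 0 \<or> x = 1)"
    then have "0 < x" "x < 1" using assms by auto
    then have "x * log b x < 0" "(1 - x) * log b (1 - x) < 0"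
      using assms by (auto intro!: mult_pos_neg)
    then show False using sum_0 by linarith
  qed
qed auto

lemma mult_log_div_gibbs_le:
  fixes x r p b :: real
  assumes "0 \<le> x" "0 \<le> r" "0 < p" "1 < b" "r = 0 \<Longrightarrow> x = 0"
  shows "x * log b (r / p) + (x - r) / ln b \<le> x * log b (x / p)"
proof (cases "x = 0")
  case True
  then show ?thesis using assms by (simp add: divide_nonpos_pos)
next
  case False
  then have x: "0 < x" and r: "0 < r" using assms by (auto simp: less_le)
  have "ln (r / x) \<le> r / x - 1" using x r by (intro ln_le_minus_one) simp
  then have "x * ln (r / x) \<le> x * (r / x - 1)" using x by (intro mult_left_mono) auto
  also have "\<dots> = r - x" using x by (simp add: field_simps)
  finally have "x * (ln r - ln p) + (x - r) \<le> x * (ln x - ln p)"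
    using x r by (simp add: ln_div right_diff_distrib)
  then have "(x * (ln r - ln p) + (x - r)) / ln b \<le> x * (ln x - ln p) / ln b"
    using assms by (intro divide_right_mono) auto
  then show ?thesis using x r assms by (simp add: log_def ln_div add_divide_distrib)
qed

section \<open>Conditional probabilities given a random variable\<close>

definition is_cond_density :: "'a measure \<Rightarrow> ('a \<Rightarrow> 'z) \<Rightarrow> 'z measure \<Rightarrow> ('a \<Rightarrow> bool) \<Rightarrow> ('z \<Rightarrow> real) \<Rightarrow> bool"
  where "is_cond_density M Z SZ P r \<longleftrightarrow> r \<in> borel_measurable SZ \<and> (\<forall>z. 0 \<le> r z) \<and>
    (\<forall>B\<in>sets SZ. emeasure M {\<omega>\<in>space M. P \<omega> \<and> Z \<omega> \<in> B} = (\<integral>\<^sup>+z\<in>B. ennreal (r z) \<partial>distr M SZ Z))"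

lemma (in prob_space) emeasure_distr_restricted:
  assumes [measurable]: "Z \<in> measurable M SZ" "{\<omega>\<in>space M. P \<omega>} \<in> events" "B \<in> sets SZ"
  shows "emeasure (distr (density M (indicator {\<omega>\<in>space M. P \<omega>})) SZ Z) B = emeasure M {\<omega>\<in>space M. P \<omega> \<and> Z \<omega> \<in> B}"
proof -
  have "emeasure (distr (density M (indicator {\<omega>\<in>space M. P \<omega>})) SZ Z) B =
      emeasure M ({\<omega>\<in>space M. P \<omega>} \<inter> (Z -` B \<inter> space M))"
    by (simp add: emeasure_distr emeasure_restricted)
  also have "{\<omega>\<in>space M. P \<omega>} \<inter> (Z -` B \<inter> space M) = {\<omega>\<in>space M. P \<omega> \<and> Z \<omega> \<in> B}" by auto
  finally show ?thesis .
qed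

lemma (in prob_space) cond_density_exists:
  assumes Z[measurable]: "Z \<in> measurable M SZ" and P: "{\<omega>\<in>space M. P \<omega>} \<in> events"
  obtains r where "is_cond_density M Z SZ P r"
proof -
  let ?PZ = "distr M SZ Z"
  interpret PZ: prob_space ?PZ by (rule prob_space_distr) simp
  define \<nu> where "\<nu> = distr (density M (indicator {\<omega>\<in>space M. P \<omega>})) SZ Z"
  have sets_\<nu>: "sets \<nu> = sets ?PZ" by (simp add: \<nu>_def)
  have emeasure_\<nu>: "emeasure \<nu> B = emeasure M {\<omega>\<in>space M. P \<omega> \<and> Z \<omega> \<in> B}" if "B \<in> sets SZ" for B
    unfolding \<nu>_def using Z P that by (rule emeasure_distr_restricted)
  have "finite_measure \<nu>"
    by (rule finite_measureI) (use emeasure_\<nu>[of "space SZ"] in \<open>simp add: \<nu>_def\<close>)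
  moreover have ac: "absolutely_continuous ?PZ \<nu>"
    unfolding absolutely_continuous_def
  proof
    fix B assume "B \<in> null_sets ?PZ"
    then have B: "B \<in> sets SZ" "emeasure M (Z -` B \<inter> space M) = 0"
      by (auto simp: null_sets_def emeasure_distr)
    have "emeasure M {\<omega>\<in>space M. P \<omega> \<and> Z \<omega> \<in> B} \<le> emeasure M (Z -` B \<inter> space M)"
      using B by (intro emeasure_mono) auto
    then show "B \<in> null_sets \<nu>" using B emeasure_\<nu>[OF B(1)] sets_\<nu> by (auto simp: null_sets_def)
  qed
  ultimately obtain r where r: "r \<in> borel_measurable ?PZ" "\<And>z. 0 \<le> r z"
    and AE_r: "AE z in ?PZ. RN_deriv ?PZ \<nu> z = ennreal (r z)"
    using PZ.real_RN_deriv[OF _ _ sets_\<nu>] by metis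
  have "density ?PZ (\<lambda>z. ennreal (r z)) = density ?PZ (RN_deriv ?PZ \<nu>)"
    using r AE_r by (intro density_cong) auto
  also have "\<dots> = \<nu>"
    using ac sets_\<nu> by (rule PZ.density_RN_deriv)
  finally have "emeasure M {\<omega>\<in>space M. P \<omega> \<and> Z \<omega> \<in> B} = (\<integral>\<^sup>+z\<in>B. ennreal (r z) \<partial>?PZ)"
    if "B \<in> sets SZ" for B
    using emeasure_\<nu>[OF that] r that by (simp flip: emeasure_density)
  with r show ?thesis
    by (intro that[of r]) (simp add: is_cond_density_def)
qed

lemma (in prob_space) cond_density_AE_zero:
  assumes Z[measurable]: "Z \<in> measurable M SZ" and r: "is_cond_density M Z SZ P r"
    and P: "{\<omega>\<in>space M. P \<omega>} \<in> events" and null: "prob {\<omega>\<in>space M. P \<omega>} = 0"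
  shows "AE z in distr M SZ Z. r z = 0"
proof -
  have [measurable]: "r \<in> borel_measurable SZ" using r by (simp add: is_cond_density_def)
  have "(\<integral>\<^sup>+z. ennreal (r z) \<partial>distr M SZ Z) = (\<integral>\<^sup>+z\<in>space SZ. ennreal (r z) \<partial>distr M SZ Z)"
    by (intro nn_integral_cong) simp
  also have "\<dots> = emeasure M {\<omega>\<in>space M. P \<omega> \<and> Z \<omega> \<in> space SZ}"
    using r by (simp add: is_cond_density_def)
  also have "\<dots> \<le> emeasure M {\<omega>\<in>space M. P \<omega>}"
    using P by (intro emeasure_mono) auto
  finally have "(\<integral>\<^sup>+z. ennreal (r z) \<partial>distr M SZ Z) = 0"
    using null by (simp add: emeasure_eq_measure)
  then have "AE z in distr M SZ Z. ennreal (r z) = 0" by (subst (asm) nn_integral_0_iff_AE) auto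
  then show ?thesis using r by (auto elim!: eventually_mono intro: antisym simp: is_cond_density_def)
qed

lemma (in prob_space) cond_density_bool_sum:
  fixes D :: "'a \<Rightarrow> bool"
  assumes [measurable]: "D \<in> measurable M (count_space UNIV)" "Z \<in> measurable M SZ"
    and r1: "is_cond_density M Z SZ (\<lambda>\<omega>. D \<omega> = True) r1"
    and r0: "is_cond_density M Z SZ (\<lambda>\<omega>. D \<omega> = False) r0"
  shows "AE z in distr M SZ Z. r1 z + r0 z = 1"
proof -
  let ?PZ = "distr M SZ Z"
  interpret PZ: prob_space ?PZ by (rule prob_space_distr) simp
  have [measurable]: "r1 \<in> borel_measurable SZ" "r0 \<in> borel_measurable SZ"
    using r1 r0 by (simp_all add: is_cond_density_def)
  have "AE z in ?PZ. ennreal (r1 z + r0 z) = 1"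
  proof (rule PZ.density_unique2)
    fix B assume "B \<in> sets ?PZ"
    then have B[measurable]: "B \<in> sets SZ" by simp
    have "(\<integral>\<^sup>+z\<in>B. ennreal (r1 z + r0 z) \<partial>?PZ) = (\<integral>\<^sup>+z\<in>B. ennreal (r1 z) \<partial>?PZ) + (\<integral>\<^sup>+z\<in>B. ennreal (r0 z) \<partial>?PZ)"
      using r1 r0 unfolding is_cond_density_def
      by (subst nn_integral_add[symmetric]) (auto intro!: nn_integral_cong simp: distrib_right)
    also have "\<dots> = (\<Sum>d\<in>UNIV. emeasure M {\<omega>\<in>space M. D \<omega> = d \<and> Z \<omega> \<in> B})"
      using r1 r0 B by (simp add: is_cond_density_def UNIV_bool add.commute)
    also have "\<dots> = emeasure M {\<omega>\<in>space M. Z \<omega> \<in> B}"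
      by (rule emeasure_Collect_split_bool[where Q="\<lambda>_ \<omega>. Z \<omega> \<in> B", symmetric]) simp
    also have "\<dots> = (\<integral>\<^sup>+z\<in>B. 1 \<partial>?PZ)"
      by (simp add: emeasure_distr vimage_def Int_def conj_commute)
    finally show "(\<integral>\<^sup>+z\<in>B. ennreal (r1 z + r0 z) \<partial>?PZ) = (\<integral>\<^sup>+z\<in>B. 1 \<partial>?PZ)" .
  qed auto
  then show ?thesis
    using r1 r0 by (auto elim!: eventually_mono simp: is_cond_density_def)
qed

lemma (in prob_space) prob_eq_integral_if_cond_density:
  assumes [measurable]: "Z \<in> measurable M SZ" "q \<in> borel_measurable SZ" "B \<in> sets SZ"
    and r: "is_cond_density M Z SZ P r" and q: "\<And>z. 0 \<le> q z" "\<And>z. q z \<le> 1"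
    and AE_q: "AE z in distr M SZ Z. q z = r z"
  shows "prob {\<omega>\<in>space M. P \<omega> \<and> Z \<omega> \<in> B} = (\<integral>\<omega>. q (Z \<omega>) * indicator B (Z \<omega>) \<partial>M)"
proof -
  have "integrable M (\<lambda>\<omega>. q (Z \<omega>) * indicator B (Z \<omega>))"
    by (rule integrable_const_bound[where B=1]) (auto simp: q indicator_def)
  then have "ennreal (\<integral>\<omega>. q (Z \<omega>) * indicator B (Z \<omega>) \<partial>M) = (\<integral>\<^sup>+\<omega>. ennreal (q (Z \<omega>) * indicator B (Z \<omega>)) \<partial>M)"
    by (rule nn_integral_eq_integral[symmetric]) (simp add: q)
  also have "\<dots> = (\<integral>\<^sup>+z\<in>B. ennreal (q z) \<partial>distr M SZ Z)"
    by (subst nn_integral_distr) (auto intro!: nn_integral_cong simp: indicator_def)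
  also have "\<dots> = (\<integral>\<^sup>+z\<in>B. ennreal (r z) \<partial>distr M SZ Z)"
    using AE_q by (intro nn_integral_cong_AE) (auto elim!: eventually_mono)
  also have "\<dots> = ennreal (prob {\<omega>\<in>space M. P \<omega> \<and> Z \<omega> \<in> B})"
    using r by (simp add: is_cond_density_def emeasure_eq_measure)
  finally show ?thesis
    by (subst (asm) ennreal_inj) (auto intro!: integral_nonneg_AE simp: q)
qed

(* q d z is a version of P(D = d | Z = z), normalised so that every constraint holds everywhere
   and not only almost everywhere with respect to the law of Z. *)
locale bool_cond_prob = prob_space +
  fixes D :: "'a \<Rightarrow> bool" and Z :: "'a \<Rightarrow> 'z" and SZ :: "'z measure" and q :: "bool \<Rightarrow> 'z \<Rightarrow> real"
  assumes measurable_D[measurable]: "D \<in> measurable M (count_space UNIV)"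
    and measurable_Z[measurable]: "Z \<in> measurable M SZ"
    and measurable_q[measurable]: "q d \<in> borel_measurable SZ"
    and q_nonneg: "0 \<le> q d z"
    and q_le_1: "q d z \<le> 1"
    and q_False: "q False z = 1 - q True z"
    and q_null: "prob {\<omega>\<in>space M. D \<omega> = d} = 0 \<Longrightarrow> q d z = 0"
    and prob_eq_integral_q: "B \<in> sets SZ \<Longrightarrow>
      prob {\<omega>\<in>space M. D \<omega> = d \<and> Z \<omega> \<in> B} = (\<integral>\<omega>. q d (Z \<omega>) * indicator B (Z \<omega>) \<partial>M)"

lemma (in prob_space) bool_cond_probI:
  fixes D :: "'a \<Rightarrow> bool"
  assumes D[measurable]: "D \<in> measurable M (count_space UNIV)" and Z[measurable]: "Z \<in> measurable M SZ"
    and r1: "is_cond_density M Z SZ (\<lambda>\<omega>. D \<omega> = True) r1"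
    and r0: "is_cond_density M Z SZ (\<lambda>\<omega>. D \<omega> = False) r0"
    and [measurable]: "q1 \<in> borel_measurable SZ" and q1: "\<And>z. 0 \<le> q1 z" "\<And>z. q1 z \<le> 1"
    and AE_q1: "AE z in distr M SZ Z. q1 z = r1 z"
    and q1_null: "\<And>z. prob {\<omega>\<in>space M. D \<omega> = True} = 0 \<Longrightarrow> q1 z = 0"
    and q1_full: "\<And>z. prob {\<omega>\<in>space M. D \<omega> = False} = 0 \<Longrightarrow> q1 z = 1"
  shows "bool_cond_prob M D Z SZ (\<lambda>d z. if d then q1 z else 1 - q1 z)"
proof (intro bool_cond_prob.intro bool_cond_prob_axioms.intro)
  have AE_q0: "AE z in distr M SZ Z. 1 - q1 z = r0 z"
    using AE_q1 cond_density_bool_sum[OF D Z r1 r0] by eventually_elim simp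
  fix d :: bool
  show "(\<lambda>z. if d then q1 z else 1 - q1 z) \<in> borel_measurable SZ" by (cases d) auto
  show "0 \<le> (if d then q1 z else 1 - q1 z)" "(if d then q1 z else 1 - q1 z) \<le> 1" for z
    using q1[of z] by auto
  show "(if d then q1 z else 1 - q1 z) = 0" if "prob {\<omega>\<in>space M. D \<omega> = d} = 0" for z
    using that q1_null q1_full by (cases d) auto
  show "prob {\<omega>\<in>space M. D \<omega> = d \<and> Z \<omega> \<in> B} =
      (\<integral>\<omega>. (if d then q1 (Z \<omega>) else 1 - q1 (Z \<omega>)) * indicator B (Z \<omega>) \<partial>M)" if "B \<in> sets SZ" for B
    using that r1 r0 AE_q1 AE_q0 q1 by (cases d) (auto intro!: prob_eq_integral_if_cond_density[OF Z])
qed (auto intro: prob_space_axioms)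

lemma (in prob_space) bool_cond_prob_exists:
  fixes D :: "'a \<Rightarrow> bool" and Z :: "'a \<Rightarrow> 'z"
  assumes D[measurable]: "D \<in> measurable M (count_space UNIV)" and Z[measurable]: "Z \<in> measurable M SZ"
  obtains q where "bool_cond_prob M D Z SZ q"
proof -
  define p where "p d = prob {\<omega>\<in>space M. D \<omega> = d}" for d
  obtain r1 where r1: "is_cond_density M Z SZ (\<lambda>\<omega>. D \<omega> = True) r1"
    using cond_density_exists[OF Z, where P="\<lambda>\<omega>. D \<omega> = True"] by auto
  obtain r0 where r0: "is_cond_density M Z SZ (\<lambda>\<omega>. D \<omega> = False) r0"
    using cond_density_exists[OF Z, where P="\<lambda>\<omega>. D \<omega> = False"] by auto
  have [measurable]: "r1 \<in> borel_measurable SZ" and r1_nonneg: "\<And>z. 0 \<le> r1 z" and r0_nonneg: "\<And>z. 0 \<le> r0 z"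
    using r1 r0 by (auto simp: is_cond_density_def)
  have r_sum: "AE z in distr M SZ Z. r1 z + r0 z = 1" by (rule cond_density_bool_sum[OF D Z r1 r0])
  have p_sum: "p True + p False = 1" unfolding p_def by (rule prob_True_add_prob_False[OF D])
  \<comment> \<open>Clamping r1 and overriding it on the degenerate cases makes the normalisations hold pointwise.\<close>
  define q1 where "q1 z = (if p True = 0 then 0 else if p False = 0 then 1 else max 0 (min 1 (r1 z)))" for z
  have AE_q1: "AE z in distr M SZ Z. q1 z = r1 z"
  proof -
    consider "p True = 0" | "p False = 0" "p True \<noteq> 0" | "p True \<noteq> 0" "p False \<noteq> 0"
      using p_sum by force
    then show ?thesis
    proof cases
      case 1
      then show ?thesis using cond_density_AE_zero[OF Z r1] by (simp add: q1_def p_def)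
    next
      case 2
      with r_sum cond_density_AE_zero[OF Z r0] show ?thesis by (auto simp: q1_def p_def)
    next
      case 3
      from r_sum show ?thesis
      proof eventually_elim
        case (elim z)
        then have "r1 z \<le> 1" using r0_nonneg[of z] by linarith
        then show ?case using 3 r1_nonneg[of z] by (simp add: q1_def)
      qed
    qed
  qed
  have "bool_cond_prob M D Z SZ (\<lambda>d z. if d then q1 z else 1 - q1 z)"
    by (rule bool_cond_probI[OF D Z r1 r0 _ _ _ AE_q1]) (use p_sum in \<open>auto simp: q1_def p_def\<close>)
  then show ?thesis by (rule that)
qed

context bool_cond_prob
begin

lemma integral_q: "(\<integral>\<omega>. q d (Z \<omega>) \<partial>M) = prob {\<omega>\<in>space M. D \<omega> = d}"
proof -
  have "prob {\<omega>\<in>space M. D \<omega> = d} = prob {\<omega>\<in>space M. D \<omega> = d \<and> Z \<omega> \<in> space SZ}"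
    using measurable_space[OF measurable_Z] by (intro arg_cong[where f=prob]) auto
  also have "\<dots> = (\<integral>\<omega>. q d (Z \<omega>) * indicator (space SZ) (Z \<omega>) \<partial>M)"
    by (rule prob_eq_integral_q) simp
  also have "\<dots> = (\<integral>\<omega>. q d (Z \<omega>) \<partial>M)"
    using measurable_space[OF measurable_Z] by (intro Bochner_Integration.integral_cong) auto
  finally show ?thesis ..
qed

lemma integrable_q_mult_indicator: "integrable M (\<lambda>\<omega>. q d (Z \<omega>) * indicator B (Z \<omega>))"
  if "B \<in> sets SZ"
  using that by (intro integrable_const_bound[where B=1]) (auto simp: q_nonneg q_le_1 indicator_def)

lemma integrable_q_mult_comp:
  fixes h :: "'z \<Rightarrow> bool" and c :: "bool \<Rightarrow> real"
  assumes [measurable]: "h \<in> measurable SZ (count_space UNIV)"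
  shows "integrable M (\<lambda>\<omega>. q d (Z \<omega>) * c (h (Z \<omega>)))"
proof (rule integrable_const_bound[where B="\<bar>c True\<bar> + \<bar>c False\<bar>"])
  have "\<bar>q d z * c y\<bar> \<le> \<bar>c True\<bar> + \<bar>c False\<bar>" for z y
  proof -
    have "\<bar>q d z * c y\<bar> \<le> \<bar>c y\<bar>"
      by (simp add: abs_mult q_nonneg q_le_1 mult_left_le_one_le)
    then show ?thesis by (cases y) auto
  qed
  then show "AE \<omega> in M. norm (q d (Z \<omega>) * c (h (Z \<omega>))) \<le> \<bar>c True\<bar> + \<bar>c False\<bar>" by simp
qed measurable

lemma integral_q_mult_comp:
  fixes h :: "'z \<Rightarrow> bool" and c :: "bool \<Rightarrow> real"
  assumes [measurable]: "h \<in> measurable SZ (count_space UNIV)"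
  shows "(\<integral>\<omega>. q d (Z \<omega>) * c (h (Z \<omega>)) \<partial>M) =
    (\<Sum>y\<in>UNIV. c y * prob {\<omega>\<in>space M. D \<omega> = d \<and> h (Z \<omega>) = y})"
proof -
  have "(\<integral>\<omega>. q d (Z \<omega>) * c (h (Z \<omega>)) \<partial>M) =
      (\<integral>\<omega>. (\<Sum>y\<in>UNIV. c y * (q d (Z \<omega>) * indicator (h -` {y} \<inter> space SZ) (Z \<omega>))) \<partial>M)"
    using measurable_space[OF measurable_Z]
    by (intro Bochner_Integration.integral_cong) (auto simp: UNIV_bool indicator_def)
  also have "\<dots> = (\<Sum>y\<in>UNIV. c y * (\<integral>\<omega>. q d (Z \<omega>) * indicator (h -` {y} \<inter> space SZ) (Z \<omega>) \<partial>M))"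
    by (simp add: integrable_q_mult_indicator)
  also have "\<dots> = (\<Sum>y\<in>UNIV. c y * prob {\<omega>\<in>space M. D \<omega> = d \<and> h (Z \<omega>) = y})"
  proof (intro sum.cong arg_cong2[where f="(*)"] refl)
    fix y
    have "{\<omega>\<in>space M. D \<omega> = d \<and> Z \<omega> \<in> h -` {y} \<inter> space SZ} = {\<omega>\<in>space M. D \<omega> = d \<and> h (Z \<omega>) = y}"
      using measurable_space[OF measurable_Z] by auto
    then show "(\<integral>\<omega>. q d (Z \<omega>) * indicator (h -` {y} \<inter> space SZ) (Z \<omega>) \<partial>M) =
        prob {\<omega>\<in>space M. D \<omega> = d \<and> h (Z \<omega>) = y}"
      using prob_eq_integral_q[of "h -` {y} \<inter> space SZ" d] by simp
  qed
  finally show ?thesis .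
qed

(* The tower property: q' is the conditional probability given the coarser variable h(Z). *)
lemma integral_q_mult_comp_eq:
  fixes h :: "'z \<Rightarrow> bool" and c :: "bool \<Rightarrow> real"
  assumes h[measurable]: "h \<in> measurable SZ (count_space UNIV)"
    and q': "bool_cond_prob M D (\<lambda>\<omega>. h (Z \<omega>)) (count_space UNIV) q'"
  shows "(\<integral>\<omega>. q d (Z \<omega>) * c (h (Z \<omega>)) \<partial>M) = (\<integral>\<omega>. q' d (h (Z \<omega>)) * c (h (Z \<omega>)) \<partial>M)"
proof -
  interpret q': bool_cond_prob M D "\<lambda>\<omega>. h (Z \<omega>)" "count_space UNIV" q' by (fact q')
  show ?thesis
    using integral_q_mult_comp[OF h] q'.integral_q_mult_comp[of "\<lambda>y. y" d c] by simp
qed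

lemma prob_eq_0_iff_AE_q_eq_0:
  fixes h :: "'z \<Rightarrow> bool"
  assumes h[measurable]: "h \<in> measurable SZ (count_space UNIV)"
  shows "prob {\<omega>\<in>space M. D \<omega> = d \<and> h (Z \<omega>) = y} = 0 \<longleftrightarrow> (AE \<omega> in M. h (Z \<omega>) = y \<longrightarrow> q d (Z \<omega>) = 0)"
proof -
  have "prob {\<omega>\<in>space M. D \<omega> = d \<and> h (Z \<omega>) = y} = (\<integral>\<omega>. q d (Z \<omega>) * of_bool (h (Z \<omega>) = y) \<partial>M)"
    using integral_q_mult_comp[OF h, of d "\<lambda>y'. of_bool (y' = y)"] by (cases y) (simp_all add: UNIV_bool)
  also have "\<dots> = 0 \<longleftrightarrow> (AE \<omega> in M. q d (Z \<omega>) * of_bool (h (Z \<omega>) = y) = 0)"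
    using integrable_q_mult_comp[OF h, of d "\<lambda>y'. of_bool (y' = y)"]
    by (intro integral_nonneg_eq_0_iff_AE) (auto simp: q_nonneg)
  also have "\<dots> \<longleftrightarrow> (AE \<omega> in M. h (Z \<omega>) = y \<longrightarrow> q d (Z \<omega>) = 0)"
    by (intro AE_cong) auto
  finally show ?thesis .
qed

lemma AE_D_eq_comp_if_q_True_01:
  assumes "AE \<omega> in M. q True (Z \<omega>) = 0 \<or> q True (Z \<omega>) = 1"
  shows "AE \<omega> in M. D \<omega> = (q True (Z \<omega>) = 1)"
proof -
  define h where "h z = (q True z = 1)" for z
  have h[measurable]: "h \<in> measurable SZ (count_space UNIV)" unfolding h_def by measurable
  have "prob {\<omega>\<in>space M. D \<omega> = True \<and> h (Z \<omega>) = False} = 0"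
    using assms by (subst prob_eq_0_iff_AE_q_eq_0[OF h]) (auto elim!: eventually_mono simp: h_def)
  moreover have "prob {\<omega>\<in>space M. D \<omega> = False \<and> h (Z \<omega>) = True} = 0"
    by (subst prob_eq_0_iff_AE_q_eq_0[OF h]) (simp add: h_def q_False)
  ultimately have "AE \<omega> in M. \<not> (D \<omega> \<and> \<not> h (Z \<omega>))" "AE \<omega> in M. \<not> (\<not> D \<omega> \<and> h (Z \<omega>))"
    by (simp_all add: prob_Collect_eq_0)
  then show ?thesis by eventually_elim (auto simp: h_def)
qed

lemma AE_q_True_01_if_D_eq_comp:
  fixes h :: "'z \<Rightarrow> bool"
  assumes h[measurable]: "h \<in> measurable SZ (count_space UNIV)" and D_eq: "AE \<omega> in M. D \<omega> = h (Z \<omega>)"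
  shows "AE \<omega> in M. q True (Z \<omega>) = 0 \<or> q True (Z \<omega>) = 1"
proof -
  have "AE \<omega> in M. h (Z \<omega>) = (\<not> d) \<longrightarrow> q d (Z \<omega>) = 0" for d
    using D_eq by (subst prob_eq_0_iff_AE_q_eq_0[OF h, symmetric], subst prob_Collect_eq_0)
      (auto elim!: eventually_mono)
  from this[of True] this[of False] show ?thesis
    by eventually_elim (auto simp: q_False)
qed

lemma measurable_q_pair[measurable]:
  assumes "sets N = sets SZ"
  shows "(\<lambda>x. q (fst x) (snd x)) \<in> borel_measurable (count_space UNIV \<Otimes>\<^sub>M N)"
proof -
  have "(\<lambda>x. q (fst x) (snd x)) = (\<lambda>x. if fst x then q True (snd x) else q False (snd x))"
    by (simp add: fun_eq_iff)
  moreover have [measurable]: "q d \<in> borel_measurable N" for d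
    unfolding measurable_cong_sets[OF assms refl] by (rule measurable_q)
  ultimately show ?thesis by (simp only:) measurable
qed

lemma distr_pair_eq_density:
  "distr M (count_space UNIV \<Otimes>\<^sub>M SZ) (\<lambda>\<omega>. (D \<omega>, Z \<omega>)) =
    density (count_space UNIV \<Otimes>\<^sub>M distr M SZ Z) (\<lambda>x. q (fst x) (snd x))"
proof (rule measure_eqI)
  let ?PZ = "distr M SZ Z"
  interpret PZ: prob_space ?PZ by (rule prob_space_distr) simp
  have sets_eq: "sets (count_space UNIV \<Otimes>\<^sub>M ?PZ) = sets (count_space UNIV \<Otimes>\<^sub>M SZ)"
    by (rule sets_pair_measure_cong) auto
  show "sets (distr M (count_space UNIV \<Otimes>\<^sub>M SZ) (\<lambda>\<omega>. (D \<omega>, Z \<omega>))) =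
      sets (density (count_space UNIV \<Otimes>\<^sub>M ?PZ) (\<lambda>x. q (fst x) (snd x)))"
    unfolding sets_density sets_distr by (rule sets_eq[symmetric])
  fix C assume "C \<in> sets (distr M (count_space UNIV \<Otimes>\<^sub>M SZ) (\<lambda>\<omega>. (D \<omega>, Z \<omega>)))"
  then have C[measurable]: "C \<in> sets (count_space UNIV \<Otimes>\<^sub>M SZ)" by simp
  have C_slice[measurable]: "Pair d -` C \<in> sets SZ" for d using C by (rule sets_Pair1)
  have "emeasure (distr M (count_space UNIV \<Otimes>\<^sub>M SZ) (\<lambda>\<omega>. (D \<omega>, Z \<omega>))) C =
      emeasure M {\<omega>\<in>space M. Z \<omega> \<in> Pair (D \<omega>) -` C}"
    by (subst emeasure_distr) (auto intro!: arg_cong[where f="emeasure M"])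
  also have "\<dots> = (\<Sum>d\<in>UNIV. emeasure M {\<omega>\<in>space M. D \<omega> = d \<and> Z \<omega> \<in> Pair d -` C})"
    by (rule emeasure_Collect_split_bool[where Q="\<lambda>d \<omega>. Z \<omega> \<in> Pair d -` C"]) simp
  also have "\<dots> = (\<Sum>d\<in>UNIV. \<integral>\<^sup>+\<omega>. ennreal (q d (Z \<omega>) * indicator (Pair d -` C) (Z \<omega>)) \<partial>M)"
    using prob_eq_integral_q[OF C_slice]
    by (simp add: emeasure_eq_measure nn_integral_eq_integral integrable_q_mult_indicator q_nonneg)
  also have "\<dots> = (\<integral>\<^sup>+d. \<integral>\<^sup>+z. ennreal (q d z) * indicator C (d, z) \<partial>?PZ \<partial>count_space UNIV)"
    by (auto simp: nn_integral_count_space_finite nn_integral_distr intro!: sum.cong nn_integral_cong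
        split: split_indicator)
  also have "\<dots> = (\<integral>\<^sup>+x\<in>C. ennreal (q (fst x) (snd x)) \<partial>(count_space UNIV \<Otimes>\<^sub>M ?PZ))"
    by (subst PZ.nn_integral_fst[symmetric]) (auto simp: sets_eq)
  also have "\<dots> = emeasure (density (count_space UNIV \<Otimes>\<^sub>M ?PZ) (\<lambda>x. q (fst x) (snd x))) C"
    by (subst emeasure_density) (auto simp: sets_eq)
  finally show "emeasure (distr M (count_space UNIV \<Otimes>\<^sub>M SZ) (\<lambda>\<omega>. (D \<omega>, Z \<omega>))) C =
      emeasure (density (count_space UNIV \<Otimes>\<^sub>M ?PZ) (\<lambda>x. q (fst x) (snd x))) C" .
qed

lemma abs_q_mult_log_div_le:
  assumes "1 < b"
  shows "\<bar>q d z * log b (q d z / prob {\<omega>\<in>space M. D \<omega> = d})\<bar> \<le> (1 + \<bar>ln (prob {\<omega>\<in>space M. D \<omega> = d})\<bar>) / ln b"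
proof (cases "prob {\<omega>\<in>space M. D \<omega> = d} = 0")
  case True
  then show ?thesis using assms by (simp add: q_null)
next
  case False
  then show ?thesis
    using assms by (intro abs_mult_log_div_le) (auto simp: q_nonneg q_le_1 zero_less_measure_iff)
qed

lemma integrable_q_mult_log_div:
  assumes "1 < b" "0 < c"
  shows "integrable M (\<lambda>\<omega>. q d (Z \<omega>) * log b (q d (Z \<omega>) / c))"
  by (rule integrable_const_bound[where B="(1 + \<bar>ln c\<bar>) / ln b"])
     (use assms in \<open>auto intro!: abs_mult_log_div_le q_nonneg q_le_1\<close>)

lemma integral_q_mult_log_div:
  fixes d :: bool
  assumes "1 < b"
  defines "p \<equiv> prob {\<omega>\<in>space M. D \<omega> = d}"
  shows "(\<integral>\<omega>. q d (Z \<omega>) * log b (q d (Z \<omega>) / p) \<partial>M) = (\<integral>\<omega>. q d (Z \<omega>) * log b (q d (Z \<omega>)) \<partial>M) - p * log b p"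
proof (cases "p = 0")
  case True
  then show ?thesis by (simp add: p_def q_null)
next
  case False
  then have p: "0 < p" by (simp add: p_def zero_less_measure_iff)
  have "q d z * log b (q d z / p) = q d z * log b (q d z) - log b p * q d z" for z
    using p q_nonneg[of d z] by (cases "q d z = 0") (auto simp: log_divide algebra_simps)
  then have "(\<integral>\<omega>. q d (Z \<omega>) * log b (q d (Z \<omega>) / p) \<partial>M) =
      (\<integral>\<omega>. q d (Z \<omega>) * log b (q d (Z \<omega>)) \<partial>M) - log b p * (\<integral>\<omega>. q d (Z \<omega>) \<partial>M)"
    using integrable_q_mult_log_div[OF assms(1), of 1 d] integrable_q_mult_comp[of "\<lambda>_. True" d "\<lambda>_. 1"]
    by simp
  then show ?thesis by (simp add: integral_q p_def)
qed

lemma AE_q_eq_0_if_comp: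
  fixes h :: "'z \<Rightarrow> bool"
  assumes h[measurable]: "h \<in> measurable SZ (count_space UNIV)"
    and q': "bool_cond_prob M D (\<lambda>\<omega>. h (Z \<omega>)) (count_space UNIV) q'"
  shows "AE \<omega> in M. q' d (h (Z \<omega>)) = 0 \<longrightarrow> q d (Z \<omega>) = 0"
proof -
  define c :: "bool \<Rightarrow> real" where "c y = (if q' d y = 0 then 1 else 0)" for y
  have c_zero: "q' d y * c y = 0" for y by (simp add: c_def)
  have "(\<integral>\<omega>. q d (Z \<omega>) * c (h (Z \<omega>)) \<partial>M) = (\<integral>\<omega>. q' d (h (Z \<omega>)) * c (h (Z \<omega>)) \<partial>M)"
    by (rule integral_q_mult_comp_eq[OF h q'])
  also have "\<dots> = 0"
    by (simp add: c_zero)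
  finally have "AE \<omega> in M. q d (Z \<omega>) * c (h (Z \<omega>)) = 0"
    using integrable_q_mult_comp[OF h] by (subst (asm) integral_nonneg_eq_0_iff_AE) (auto simp: c_def q_nonneg)
  then show ?thesis by (auto elim!: eventually_mono simp: c_def)
qed

(* Data processing for one value d: by the tower property the left-hand side is the integral of
   q log (q' / p), and ln u <= u - 1 bounds this by the right-hand side. *)
lemma integral_comp_q_mult_log_div_le:
  fixes d :: bool and h :: "'z \<Rightarrow> bool"
  assumes b: "1 < b" and h[measurable]: "h \<in> measurable SZ (count_space UNIV)"
    and q': "bool_cond_prob M D (\<lambda>\<omega>. h (Z \<omega>)) (count_space UNIV) q'"
  defines "p \<equiv> prob {\<omega>\<in>space M. D \<omega> = d}"
  shows "(\<integral>\<omega>. q' d (h (Z \<omega>)) * log b (q' d (h (Z \<omega>)) / p) \<partial>M) \<le> (\<integral>\<omega>. q d (Z \<omega>) * log b (q d (Z \<omega>) / p) \<partial>M)"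
proof -
  interpret q': bool_cond_prob M D "\<lambda>\<omega>. h (Z \<omega>)" "count_space UNIV" q' by (fact q')
  show ?thesis
  proof (cases "p = 0")
    case True
    then show ?thesis by (simp add: p_def q_null q'.q_null)
  next
    case False
    then have p: "0 < p" by (simp add: p_def zero_less_measure_iff)
    let ?Q = "\<lambda>\<omega>. q d (Z \<omega>)" and ?R = "\<lambda>\<omega>. q' d (h (Z \<omega>))"
    let ?L = "\<lambda>y. log b (q' d y / p)"
    have int_Q: "integrable M ?Q" and int_R: "integrable M ?R" and int_QL: "integrable M (\<lambda>\<omega>. ?Q \<omega> * ?L (h (Z \<omega>)))"
      using integrable_q_mult_comp[OF h, of d "\<lambda>_. 1"] q'.integrable_q_mult_comp[of "\<lambda>y. y" d "\<lambda>_. 1"]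
        integrable_q_mult_comp[OF h, of d ?L] by simp_all
    have "(\<integral>\<omega>. ?R \<omega> * log b (?R \<omega> / p) \<partial>M) = (\<integral>\<omega>. ?Q \<omega> * ?L (h (Z \<omega>)) \<partial>M)"
      by (rule integral_q_mult_comp_eq[OF h q', symmetric])
    also have "\<dots> = (\<integral>\<omega>. ?Q \<omega> * ?L (h (Z \<omega>)) + (?Q \<omega> - ?R \<omega>) / ln b \<partial>M)"
      using int_Q int_R int_QL by (simp add: integral_q q'.integral_q)
    also have "\<dots> \<le> (\<integral>\<omega>. ?Q \<omega> * log b (?Q \<omega> / p) \<partial>M)"
    proof (rule integral_mono_AE)
      show "integrable M (\<lambda>\<omega>. ?Q \<omega> * ?L (h (Z \<omega>)) + (?Q \<omega> - ?R \<omega>) / ln b)"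
        using int_Q int_R int_QL by simp
      show "integrable M (\<lambda>\<omega>. ?Q \<omega> * log b (?Q \<omega> / p))"
        by (rule integrable_q_mult_log_div[OF b p])
      show "AE \<omega> in M. ?Q \<omega> * ?L (h (Z \<omega>)) + (?Q \<omega> - ?R \<omega>) / ln b \<le> ?Q \<omega> * log b (?Q \<omega> / p)"
        using AE_q_eq_0_if_comp[OF h q']
        by eventually_elim (auto intro!: mult_log_div_gibbs_le q_nonneg q'.q_nonneg p b)
    qed
    finally show ?thesis .
  qed
qed

end

section \<open>Mutual information with a Boolean variable\<close>

lemma (in information_space) mutual_information_bool_cond_prob:
  assumes "bool_cond_prob M D Z SZ q"
  shows "mutual_information b (count_space UNIV) SZ D Z =
    (\<Sum>d\<in>UNIV. \<integral>\<omega>. q d (Z \<omega>) * log b (q d (Z \<omega>) / prob {\<omega>\<in>space M. D \<omega> = d}) \<partial>M)"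
proof -
  interpret bool_cond_prob M D Z SZ q by fact
  define p where "p d = prob {\<omega>\<in>space M. D \<omega> = d}" for d
  define f where "f x = q (fst x) (snd x) * log b (q (fst x) (snd x) / p (fst x))" for x
  let ?PZ = "distr M SZ Z"
  let ?\<mu> = "count_space (UNIV :: bool set) \<Otimes>\<^sub>M ?PZ"
  interpret PZ: prob_space ?PZ by (rule prob_space_distr) simp
  interpret \<mu>: pair_sigma_finite "count_space (UNIV :: bool set)" ?PZ
    by (intro pair_sigma_finite.intro sigma_finite_measure_count_space_finite PZ.sigma_finite_measure_axioms) simp
  interpret \<mu>: finite_measure ?\<mu>
    by (rule finite_measure_pair_measure) (auto intro: finite_measure_count_space PZ.finite_measure_axioms)
  have [measurable]: "(\<lambda>x. q (fst x) (snd x)) \<in> borel_measurable ?\<mu>"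
    by (rule measurable_q_pair) simp
  have "integrable ?\<mu> f"
  proof (rule \<mu>.integrable_const_bound[where B="\<Sum>d\<in>UNIV. (1 + \<bar>ln (p d)\<bar>) / ln b"])
    have "\<bar>f x\<bar> \<le> (1 + \<bar>ln (p (fst x))\<bar>) / ln b" for x
      unfolding f_def p_def by (rule abs_q_mult_log_div_le[OF b_gt_1])
    also have "\<dots> x \<le> (\<Sum>d\<in>UNIV. (1 + \<bar>ln (p d)\<bar>) / ln b)" for x
      by (rule member_le_sum) (auto intro!: divide_nonneg_pos ln_gt_zero b_gt_1)
    finally show "AE x in ?\<mu>. norm (f x) \<le> (\<Sum>d\<in>UNIV. (1 + \<bar>ln (p d)\<bar>) / ln b)" by simp
  qed (unfold f_def, measurable)
  have "mutual_information b (count_space UNIV) SZ D Z =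
      KL_divergence b (density ?\<mu> (\<lambda>x. p (fst x))) (density ?\<mu> (\<lambda>x. q (fst x) (snd x)))"
    unfolding mutual_information_def distr_pair_eq_density p_def
    by (simp add: distr_bool_pair_measure_eq_density PZ.sigma_finite_measure_axioms)
  also have "\<dots> = integral\<^sup>L ?\<mu> f"
    unfolding f_def
    by (rule \<mu>.KL_density_density) (auto simp: b_gt_1 q_nonneg p_def q_null)
  also have "\<dots> = (\<Sum>d\<in>UNIV. \<integral>z. q d z * log b (q d z / p d) \<partial>?PZ)"
    using \<mu>.integral_fst'[OF \<open>integrable ?\<mu> f\<close>]
    by (simp add: f_def lebesgue_integral_count_space_finite)
  also have "\<dots> = (\<Sum>d\<in>UNIV. \<integral>\<omega>. q d (Z \<omega>) * log b (q d (Z \<omega>) / p d) \<partial>M)"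
    by (intro sum.cong refl integral_distr) auto
  finally show ?thesis unfolding p_def .
qed

lemma (in information_space) mutual_information_minus_entropy_bool:
  assumes q: "bool_cond_prob M D Z SZ q"
  shows "mutual_information b (count_space UNIV) SZ D Z - entropy b (count_space UNIV) D =
    (\<integral>\<omega>. (\<Sum>d\<in>UNIV. q d (Z \<omega>) * log b (q d (Z \<omega>))) \<partial>M)"
proof -
  interpret bool_cond_prob M D Z SZ q by (fact q)
  have "integrable M (\<lambda>\<omega>. q d (Z \<omega>) * log b (q d (Z \<omega>)))" for d
    using integrable_q_mult_log_div[OF b_gt_1, of 1 d] by simp
  then show ?thesis
    by (simp add: mutual_information_bool_cond_prob[OF q] entropy_bool integral_q_mult_log_div[OF b_gt_1]
        sum_subtractf Bochner_Integration.integral_sum)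
qed

lemma (in information_space) mutual_information_eq_entropy_iff_q_True_01:
  assumes q: "bool_cond_prob M D Z SZ q"
  shows "mutual_information b (count_space UNIV) SZ D Z = entropy b (count_space UNIV) D \<longleftrightarrow>
    (AE \<omega> in M. q True (Z \<omega>) = 0 \<or> q True (Z \<omega>) = 1)"
proof -
  interpret bool_cond_prob M D Z SZ q by (fact q)
  define \<phi> where "\<phi> x = x * log b x + (1 - x) * log b (1 - x)" for x
  have \<phi>_q: "(\<Sum>d\<in>UNIV. q d z * log b (q d z)) = \<phi> (q True z)" for z
    by (simp add: \<phi>_def UNIV_bool q_False)
  have "mutual_information b (count_space UNIV) SZ D Z - entropy b (count_space UNIV) D =
      (\<integral>\<omega>. \<phi> (q True (Z \<omega>)) \<partial>M)"
    using mutual_information_minus_entropy_bool[OF q] by (simp add: \<phi>_q)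
  then have "mutual_information b (count_space UNIV) SZ D Z = entropy b (count_space UNIV) D \<longleftrightarrow>
      (\<integral>\<omega>. - \<phi> (q True (Z \<omega>)) \<partial>M) = 0"
    by auto
  also have "\<dots> \<longleftrightarrow> (AE \<omega> in M. - \<phi> (q True (Z \<omega>)) = 0)"
  proof (rule integral_nonneg_eq_0_iff_AE)
    show "integrable M (\<lambda>\<omega>. - \<phi> (q True (Z \<omega>)))"
      using integrable_q_mult_log_div[OF b_gt_1, of 1] by (simp add: \<phi>_q[symmetric] del: \<phi>_def)
    have "0 \<le> - \<phi> x" if "0 \<le> x" "x \<le> 1" for x
      using that mult_log_nonpos[of x b] mult_log_nonpos[of "1 - x" b] b_gt_1 by (simp add: \<phi>_def)
    then show "AE \<omega> in M. 0 \<le> - \<phi> (q True (Z \<omega>))" by (simp add: q_nonneg q_le_1)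
  qed
  also have "\<dots> \<longleftrightarrow> (AE \<omega> in M. q True (Z \<omega>) = 0 \<or> q True (Z \<omega>) = 1)"
    unfolding neg_equal_0_iff_equal \<phi>_def binary_entropy_eq_0_iff[OF q_nonneg q_le_1 b_gt_1] ..
  finally show ?thesis .
qed

lemma (in information_space) mutual_information_eq_entropy_iff_determined:
  fixes D :: "'a \<Rightarrow> bool"
  assumes D[measurable]: "D \<in> measurable M (count_space UNIV)" and Z[measurable]: "Z \<in> measurable M SZ"
  shows "mutual_information b (count_space UNIV) SZ D Z = entropy b (count_space UNIV) D \<longleftrightarrow>
    (\<exists>h\<in>measurable SZ (count_space UNIV). AE \<omega> in M. D \<omega> = h (Z \<omega>))"
proof -
  obtain q where q: "bool_cond_prob M D Z SZ q" using bool_cond_prob_exists[OF D Z] .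
  interpret bool_cond_prob M D Z SZ q by (fact q)
  show ?thesis
    unfolding mutual_information_eq_entropy_iff_q_True_01[OF q]
  proof
    assume "AE \<omega> in M. q True (Z \<omega>) = 0 \<or> q True (Z \<omega>) = 1"
    then have "AE \<omega> in M. D \<omega> = (q True (Z \<omega>) = 1)" by (rule AE_D_eq_comp_if_q_True_01)
    moreover have "(\<lambda>z. q True z = 1) \<in> measurable SZ (count_space UNIV)" by measurable
    ultimately show "\<exists>h\<in>measurable SZ (count_space UNIV). AE \<omega> in M. D \<omega> = h (Z \<omega>)" by (rule bexI[where x="\<lambda>z. q True z = 1"])
  next
    assume "\<exists>h\<in>measurable SZ (count_space UNIV). AE \<omega> in M. D \<omega> = h (Z \<omega>)"
    then obtain h where "h \<in> measurable SZ (count_space UNIV)" "AE \<omega> in M. D \<omega> = h (Z \<omega>)" ..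
    then show "AE \<omega> in M. q True (Z \<omega>) = 0 \<or> q True (Z \<omega>) = 1" by (rule AE_q_True_01_if_D_eq_comp)
  qed
qed

lemma (in prob_space) mutual_information_cong_AE:
  assumes [measurable]: "X \<in> measurable M S" "Y \<in> measurable M T" "Y' \<in> measurable M T"
    and "AE \<omega> in M. Y \<omega> = Y' \<omega>"
  shows "mutual_information b S T X Y = mutual_information b S T X Y'"
proof -
  have "distr M T Y = distr M T Y'"
    by (rule distr_cong_AE) (use assms in auto)
  moreover have "distr M (S \<Otimes>\<^sub>M T) (\<lambda>\<omega>. (X \<omega>, Y \<omega>)) = distr M (S \<Otimes>\<^sub>M T) (\<lambda>\<omega>. (X \<omega>, Y' \<omega>))"
    by (rule distr_cong_AE) (use assms in \<open>auto elim!: eventually_mono\<close>)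
  ultimately show ?thesis by (simp add: mutual_information_def)
qed

lemma (in information_space) mutual_information_comp_le:
  fixes A :: "'a \<Rightarrow> bool" and h :: "'z \<Rightarrow> bool"
  assumes A[measurable]: "A \<in> measurable M (count_space UNIV)" and Z[measurable]: "Z \<in> measurable M SZ"
    and h[measurable]: "h \<in> measurable SZ (count_space UNIV)"
  shows "mutual_information b (count_space UNIV) (count_space UNIV) A (\<lambda>\<omega>. h (Z \<omega>))
    \<le> mutual_information b (count_space UNIV) SZ A Z"
proof -
  obtain q where q: "bool_cond_prob M A Z SZ q" using bool_cond_prob_exists[OF A Z] .
  obtain q' where q': "bool_cond_prob M A (\<lambda>\<omega>. h (Z \<omega>)) (count_space UNIV) q'"
    using bool_cond_prob_exists[OF A, of "\<lambda>\<omega>. h (Z \<omega>)" "count_space UNIV"] by auto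
  interpret bool_cond_prob M A Z SZ q by (fact q)
  show ?thesis
    unfolding mutual_information_bool_cond_prob[OF q] mutual_information_bool_cond_prob[OF q']
    by (intro sum_mono integral_comp_q_mult_log_div_le[OF b_gt_1 h q'])
qed

lemma (in information_space) mutual_information_le_if_entropy_eq:
  fixes A D :: "'a \<Rightarrow> bool"
  assumes A[measurable]: "A \<in> measurable M (count_space UNIV)" and D[measurable]: "D \<in> measurable M (count_space UNIV)"
    and Z[measurable]: "Z \<in> measurable M SZ"
    and "mutual_information b (count_space UNIV) SZ D Z = entropy b (count_space UNIV) D"
  shows "mutual_information b (count_space UNIV) (count_space UNIV) A D \<le> mutual_information b (count_space UNIV) SZ A Z"
proof -
  have "\<exists>h\<in>measurable SZ (count_space UNIV). AE \<omega> in M. D \<omega> = h (Z \<omega>)"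
    using assms(4) mutual_information_eq_entropy_iff_determined[OF D Z] by simp
  then obtain h where h[measurable]: "h \<in> measurable SZ (count_space UNIV)" and "AE \<omega> in M. D \<omega> = h (Z \<omega>)" ..
  then have "mutual_information b (count_space UNIV) (count_space UNIV) A D =
      mutual_information b (count_space UNIV) (count_space UNIV) A (\<lambda>\<omega>. h (Z \<omega>))"
    by (intro mutual_information_cong_AE) auto
  also have "\<dots> \<le> mutual_information b (count_space UNIV) SZ A Z"
    by (rule mutual_information_comp_le[OF A Z h])
  finally show ?thesis .
qed

lemma (in prob_space) distr_pair_const_eq_pair_measure:
  assumes X[measurable]: "X \<in> measurable M SX" and c: "c \<in> space SS"
  shows "distr M (SX \<Otimes>\<^sub>M SS) (\<lambda>\<omega>. (X \<omega>, c)) = distr M SX X \<Otimes>\<^sub>M distr M SS (\<lambda>_. c)"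
proof (rule pair_measure_eqI[symmetric])
  have [measurable]: "(\<lambda>_. c) \<in> measurable M SS" using c by (rule measurable_const)
  show "sigma_finite_measure (distr M SX X)" "sigma_finite_measure (distr M SS (\<lambda>_. c))"
    by (auto intro!: prob_space_imp_sigma_finite prob_space_distr)
  show "sets (distr M SX X \<Otimes>\<^sub>M distr M SS (\<lambda>_. c)) = sets (distr M (SX \<Otimes>\<^sub>M SS) (\<lambda>\<omega>. (X \<omega>, c)))"
    unfolding sets_distr by (rule sets_pair_measure_cong) simp_all
  fix A B assume "A \<in> sets (distr M SX X)" "B \<in> sets (distr M SS (\<lambda>_. c))"
  then have [measurable]: "A \<in> sets SX" "B \<in> sets SS" by simp_all
  show "emeasure (distr M SX X) A * emeasure (distr M SS (\<lambda>_. c)) B =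
      emeasure (distr M (SX \<Otimes>\<^sub>M SS) (\<lambda>\<omega>. (X \<omega>, c))) (A \<times> B)"
    by (cases "c \<in> B") (simp_all add: emeasure_distr vimage_def Int_def emeasure_space_1 conj_commute)
qed

theorem theorem2:
  fixes M :: "'m measure" and SX :: "'x measure" and X :: "'m \<Rightarrow> 'x"
    and fY fA :: "'x \<Rightarrow> bool"
  assumes P: "prob_space M"
    and X: "X \<in> measurable M SX"
    and fY: "fY \<in> measurable SX (count_space UNIV)"
    and fA: "fA \<in> measurable SX (count_space UNIV)"
  shows
    "(\<forall>(SS :: 's measure) (S :: 'm \<Rightarrow> 's) (SZ :: 'z measure) (g :: 'x \<times> 's \<Rightarrow> 'z).
        S \<in> measurable M SS \<and> distr M (SX \<Otimes>\<^sub>M SS) (\<lambda>\<omega>. (X \<omega>, S \<omega>)) = distr M SX X \<Otimes>\<^sub>M distr M SS S \<and>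
        g \<in> measurable (SX \<Otimes>\<^sub>M SS) SZ \<and>
        prob_space.mutual_information M 2 (count_space UNIV) SZ (\<lambda>\<omega>. fY (X \<omega>)) (\<lambda>\<omega>. g (X \<omega>, S \<omega>))
          = prob_space.entropy M 2 (count_space UNIV) (\<lambda>\<omega>. fY (X \<omega>))
        \<longrightarrow> prob_space.mutual_information M 2 (count_space UNIV) (count_space UNIV)
              (\<lambda>\<omega>. fA (X \<omega>)) (\<lambda>\<omega>. fY (X \<omega>))
            \<le> prob_space.mutual_information M 2 (count_space UNIV) SZ
              (\<lambda>\<omega>. fA (X \<omega>)) (\<lambda>\<omega>. g (X \<omega>, S \<omega>)))
     \<and>
     (\<exists>(SS :: 's measure) (S :: 'm \<Rightarrow> 's) (SZ :: bool measure) (g :: 'x \<times> 's \<Rightarrow> bool).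
        S \<in> measurable M SS \<and> distr M (SX \<Otimes>\<^sub>M SS) (\<lambda>\<omega>. (X \<omega>, S \<omega>)) = distr M SX X \<Otimes>\<^sub>M distr M SS S \<and>
        g \<in> measurable (SX \<Otimes>\<^sub>M SS) SZ \<and>
        prob_space.mutual_information M 2 (count_space UNIV) SZ (\<lambda>\<omega>. fY (X \<omega>)) (\<lambda>\<omega>. g (X \<omega>, S \<omega>))
          = prob_space.entropy M 2 (count_space UNIV) (\<lambda>\<omega>. fY (X \<omega>)) \<and>
        prob_space.mutual_information M 2 (count_space UNIV) SZ
              (\<lambda>\<omega>. fA (X \<omega>)) (\<lambda>\<omega>. g (X \<omega>, S \<omega>))
          = prob_space.mutual_information M 2 (count_space UNIV) (count_space UNIV)
              (\<lambda>\<omega>. fA (X \<omega>)) (\<lambda>\<omega>. fY (X \<omega>)))"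
proof -
  interpret information_space M 2
    by (rule information_space.intro[OF P]) (unfold_locales, simp)
  have Y[measurable]: "(\<lambda>\<omega>. fY (X \<omega>)) \<in> measurable M (count_space UNIV)"
    using X fY by (rule measurable_compose)
  have A[measurable]: "(\<lambda>\<omega>. fA (X \<omega>)) \<in> measurable M (count_space UNIV)"
    using X fA by (rule measurable_compose)
  have "mutual_information 2 (count_space UNIV) (count_space UNIV) (\<lambda>\<omega>. fY (X \<omega>)) (\<lambda>\<omega>. fY (X \<omega>))
      = entropy 2 (count_space UNIV) (\<lambda>\<omega>. fY (X \<omega>))"
    by (subst mutual_information_eq_entropy_iff_determined[OF Y Y]) (auto intro!: bexI[where x="\<lambda>y. y"])
  then show ?thesis
    using fY distr_pair_const_eq_pair_measure[OF X, of undefined "count_space UNIV"]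
    by (intro conjI allI impI exI[of _ "count_space UNIV"] exI[of _ "\<lambda>_. undefined"] exI[of _ "\<lambda>(x, _). fY x"])
       (auto intro!: mutual_information_le_if_entropy_eq[OF A Y] measurable_compose[OF measurable_Pair[OF X]])
qed

end
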